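(* Let $\mathcal R$ be a reaction network and $x,x'\in\mathbb{N}_0^n$. Then $x$ leads to $x'$ via $\mathcal R$ if and only if there is $(y,y')\in\mathrm{cl}(\mathcal R)$ with $x\ge y$ and $x'=x+y'-y$; equivalently, if and only if there is $(y,y')\in\mathrm{cl}(\mathcal R)$ with $(x,x')\ge(y,y')$ and $(x,x')\sim(y,y')$.
   Context: A reaction network (RN) is a (possibly infinite) subset $\mathcal R\subseteq\mathbb{N}_0^n\times\mathbb{N}_0^n$ containing no element $(y,y')$ with $y=y'$; elements $(y,y')$ are reactions $y\to y'$. Order on $\mathbb{Z}^n$ and on $\mathbb{N}_0^n\times\mathbb{N}_0^n$ is componentwise. For $r_1=(y_1,y_1'),\ r_2=(y_2,y_2')$ define $r_1\oplus r_2=(y_1+0\vee(y_2-y_1'),\ y_2'+0\vee(y_1'-y_2))$ ($\vee$ componentwise maximum); it is associative. For $A\subseteq\mathbb{N}_0^n\times\mathbb{N}_0^n$, $\mathrm{cl}(A)$ is the set of all finite $\oplus$-sums of elements of $A$ (repetitions allowed), including the empty sum $(0,0)$. $(y_1,y_1')\sim(y_2,y_2')$ means $y_1'-y_1=y_2'-y_2$. An ordered sequence of reactions $y_1\to y_1',\dots,y_m\to y_m'$ is active on $x\in\mathbb{N}_0^n$ if $x+\sum_{i=1}^{k-1}(y_i'-y_i)\ge y_k$ for all $k=1,\dots,m$. A state $x$ leads to $x'$ via $\mathcal R$ if there is an ordered sequence of $m\ge0$ reactions of $\mathcal R$ (repetitions allowed) active on $x$ with $x'=x+\sum_{i=1}^m(y_i'-y_i)$.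 *)

theory Defs
  imports Main
begin

text \<open>States in N_0^n are modelled as functions 'i \<Rightarrow> nat for a finite index type 'i
  (n = CARD('i)). A reaction is a pair (y, y') of states. Order is pointwise.\<close>

type_synonym 'i state = "'i \<Rightarrow> nat"
type_synonym 'i reaction = "'i state \<times> 'i state"

definition reaction_network :: "'i reaction set \<Rightarrow> bool" where
  "reaction_network R \<longleftrightarrow> (\<forall>(y, y') \<in> R. y \<noteq> y')"

definition rvec :: "'i reaction \<Rightarrow> 'i \<Rightarrow> int" where
  "rvec r = (\<lambda>i. int (snd r i) - int (fst r i))"

text \<open>r1 \<oplus> r2 = (y1 + 0 \<or> (y2 - y1'), y2' + 0 \<or> (y1' - y2)); truncated nat subtraction
  is exactly 0 \<or> (a - b).\<close>
definition rplus :: "'i reaction \<Rightarrow> 'i reaction \<Rightarrow> 'i reaction" where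
  "rplus r1 r2 = (\<lambda>i. fst r1 i + (fst r2 i - snd r1 i), \<lambda>i. snd r2 i + (snd r1 i - fst r2 i))"

definition cl :: "'i reaction set \<Rightarrow> 'i reaction set" where
  "cl A = {foldr rplus rs (\<lambda>_. 0, \<lambda>_. 0) | rs. set rs \<subseteq> A}"

definition rsim :: "'i reaction \<Rightarrow> 'i reaction \<Rightarrow> bool" where
  "rsim r1 r2 \<longleftrightarrow> rvec r1 = rvec r2"

definition active :: "'i reaction list \<Rightarrow> 'i state \<Rightarrow> bool" where
  "active rs x \<longleftrightarrow> (\<forall>k < length rs. \<forall>j.
      int (x j) + (\<Sum>i<k. rvec (rs ! i) j) \<ge> int (fst (rs ! k) j))"

definition leads_to :: "'i reaction set \<Rightarrow> 'i state \<Rightarrow> 'i state \<Rightarrow> bool" where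
  "leads_to R x x' \<longleftrightarrow> (\<exists>rs. set rs \<subseteq> R \<and> active rs x \<and>
      (\<forall>j. int (x' j) = int (x j) + (\<Sum>i<length rs. rvec (rs ! i) j)))"

end

theory Submission
  imports Defs
begin

text \<open>Firing a sequence of reactions one after the other is the same as firing its
  \<open>\<oplus>\<close>-sum once: by induction on the sequence, \<open>r \<oplus> s\<close> can fire on \<open>x\<close> exactly when \<open>r\<close> can
  fire on \<open>x\<close> and \<open>s\<close> can fire on the result, and the net change of \<open>r \<oplus> s\<close> is the sum
  of the net changes. Hence the reachable states are exactly the \<open>x + y' - y\<close> with
  \<open>(y, y') \<in> cl R\<close> and \<open>y \<le> x\<close>; the second characterisation is a pointwise rewriting of
  the first.\<close>

abbreviation rsum :: "'i reaction list \<Rightarrow> 'i reaction" where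
  "rsum rs \<equiv> foldr rplus rs (\<lambda>_. 0, \<lambda>_. 0)"

lemma rvec_rplus: "rvec (rplus r s) j = rvec r j + rvec s j"
  unfolding rplus_def rvec_def by auto

lemma fst_rplus_le_iff:
  "fst (rplus r s) \<le> x \<longleftrightarrow> fst r \<le> x \<and> fst s \<le> (\<lambda>j. x j - fst r j + snd r j)"
proof -
  have "fst r j + (fst s j - snd r j) \<le> x j \<longleftrightarrow>
      fst r j \<le> x j \<and> fst s j \<le> x j - fst r j + snd r j" for j
    by arith
  then show ?thesis
    unfolding rplus_def le_fun_def by (simp add: all_conj_distrib)
qed

lemma sum_lessThan_Suc_Cons:
  "(\<Sum>i<Suc k. f ((r # rs) ! i)) = f r + (\<Sum>i<k. f (rs ! i))"
  by (subst sum.lessThan_Suc_shift) simp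

lemma active_Cons:
  "active (r # rs) x \<longleftrightarrow> fst r \<le> x \<and> active rs (\<lambda>j. x j - fst r j + snd r j)"
    (is "_ \<longleftrightarrow> _ \<and> active rs ?x'")
proof -
  have shift: "int (x j) + (\<Sum>i<Suc k. rvec ((r # rs) ! i) j)
      = int (?x' j) + (\<Sum>i<k. rvec (rs ! i) j)"
    if "fst r j \<le> x j" for j k
  proof -
    have "(\<Sum>i<Suc k. rvec ((r # rs) ! i) j) = rvec r j + (\<Sum>i<k. rvec (rs ! i) j)"
      by (rule sum_lessThan_Suc_Cons)
    with that show ?thesis by (simp add: rvec_def)
  qed
  show ?thesis
  proof
    assume A: "active (r # rs) x"
    have head: "fst r \<le> x"
    proof (rule le_funI)
      fix j
      show "fst r j \<le> x j" using A[unfolded active_def, rule_format, of 0 j] by simp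
    qed
    have "active rs ?x'"
      unfolding active_def
    proof (intro allI impI)
      fix k j
      assume "k < length rs"
      then have "int (fst (rs ! k) j) \<le> int (x j) + (\<Sum>i<Suc k. rvec ((r # rs) ! i) j)"
        using A[unfolded active_def, rule_format, of "Suc k" j] by simp
      then show "int (fst (rs ! k) j) \<le> int (?x' j) + (\<Sum>i<k. rvec (rs ! i) j)"
        using shift head by (simp add: le_fun_def)
    qed
    with head show "fst r \<le> x \<and> active rs ?x'" ..
  next
    assume B: "fst r \<le> x \<and> active rs ?x'"
    show "active (r # rs) x"
      unfolding active_def
    proof (intro allI impI)
      fix k j
      assume k: "k < length (r # rs)"
      have head: "fst r j \<le> x j" using B by (simp add: le_fun_def)
      show "int (fst ((r # rs) ! k) j) \<le> int (x j) + (\<Sum>i<k. rvec ((r # rs) ! i) j)"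
      proof (cases k)
        case 0
        with head show ?thesis by simp
      next
        case (Suc k')
        with k B have "int (fst (rs ! k') j) \<le> int (?x' j) + (\<Sum>i<k'. rvec (rs ! i) j)"
          unfolding active_def by simp
        with Suc shift[OF head] show ?thesis by simp
      qed
    qed
  qed
qed

lemma active_iff_rsum_le: "active rs x \<longleftrightarrow> fst (rsum rs) \<le> x"
proof (induction rs arbitrary: x)
  case Nil
  then show ?case by (simp add: active_def le_fun_def)
next
  case (Cons r rs)
  then show ?case by (simp add: active_Cons fst_rplus_le_iff)
qed

lemma sum_rvec_eq_rvec_rsum: "(\<Sum>i<length rs. rvec (rs ! i) j) = rvec (rsum rs) j"
proof (induction rs)
  case Nil
  then show ?case by (simp add: rvec_def)
next
  case (Cons r rs)
  then show ?case
    using sum_lessThan_Suc_Cons[where f = "\<lambda>q. rvec q j" and k = "length rs"] by (simp add: rvec_rplus)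
qed

lemma cl_eq_image_rsum: "cl A = rsum ` {rs. set rs \<subseteq> A}"
  unfolding cl_def by blast

lemma leads_to_iff_cl:
  "leads_to R x x' \<longleftrightarrow>
     (\<exists>(y, y') \<in> cl R. y \<le> x \<and> (\<forall>j. int (x' j) = int (x j) + int (y' j) - int (y j)))"
proof -
  have "leads_to R x x' \<longleftrightarrow>
      (\<exists>rs. set rs \<subseteq> R \<and> fst (rsum rs) \<le> x \<and> (\<forall>j. int (x' j) = int (x j) + rvec (rsum rs) j))"
    unfolding leads_to_def by (simp add: active_iff_rsum_le sum_rvec_eq_rvec_rsum)
  also have "\<dots> \<longleftrightarrow> (\<exists>p \<in> cl R. fst p \<le> x \<and> (\<forall>j. int (x' j) = int (x j) + rvec p j))"
    unfolding cl_eq_image_rsum by blast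
  also have "\<dots> \<longleftrightarrow>
      (\<exists>(y, y') \<in> cl R. y \<le> x \<and> (\<forall>j. int (x' j) = int (x j) + int (y' j) - int (y j)))"
    by (simp add: rvec_def split_def add_diff_eq)
  finally show ?thesis .
qed

lemma net_change_iff_le_rsim:
  fixes x x' y y' :: "'i state"
  assumes "y \<le> x"
  shows "(\<forall>j. int (x' j) = int (x j) + int (y' j) - int (y j)) \<longleftrightarrow> y' \<le> x' \<and> rsim (x, x') (y, y')"
proof -
  have "int (x' j) = int (x j) + int (y' j) - int (y j) \<longleftrightarrow>
      y' j \<le> x' j \<and> int (x' j) - int (x j) = int (y' j) - int (y j)" for j
    using assms[unfolded le_fun_def, rule_format, of j] by linarith
  then show ?thesis
    unfolding rsim_def rvec_def le_fun_def fun_eq_iff by (simp add: all_conj_distrib)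
qed

theorem lemma3p3:
  fixes R :: "('i::finite) reaction set" and x x' :: "'i state"
  assumes "reaction_network R"
  shows "(leads_to R x x' \<longleftrightarrow>
           (\<exists>(y, y') \<in> cl R. y \<le> x \<and> (\<forall>j. int (x' j) = int (x j) + int (y' j) - int (y j))))
       \<and> (leads_to R x x' \<longleftrightarrow>
           (\<exists>(y, y') \<in> cl R. y \<le> x \<and> y' \<le> x' \<and> rsim (x, x') (y, y')))"
proof -
  have "(\<exists>(y, y') \<in> cl R. y \<le> x \<and> (\<forall>j. int (x' j) = int (x j) + int (y' j) - int (y j)))
      \<longleftrightarrow> (\<exists>(y, y') \<in> cl R. y \<le> x \<and> y' \<le> x' \<and> rsim (x, x') (y, y'))"
    unfolding Bex_def split_def using net_change_iff_le_rsim[of _ x x'] by blast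
  with leads_to_iff_cl[of R x x'] show ?thesis by blast
qed

end
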